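(* Let $n,m,q\ge 1$ and $\beta\in[0,1]$. Let $B_0\in\mathbb{R}^{n\times n}$ be symmetric positive definite and $U=B_0^{1/2}$ its symmetric positive definite square root. Let $X_f\in\mathbb{R}^{n\times m}$ and $P_f=X_fX_f^T$. Let $\hat H\in\mathbb{R}^{q\times n}$ be any real matrix, $\hat R\in\mathbb{R}^{q\times q}$ symmetric positive definite, and $K=\hat H^T\hat R^{-1}\hat H$. Let $U_h=\bigl[\sqrt{1-\beta}\,U\ \ \sqrt{\beta}\,X_f\bigr]\in\mathbb{R}^{n\times(n+m)}$ and $S_{P4D}=I_{n+m}+U_h^TKU_h$. Then \[ 1\le \kappa(S_{P4D})\le 1+\bigl[(1-\beta)\lambda_1(B_0)+\beta\lambda_1(P_f)\bigr]\lambda_1(K). \]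
   Context: For a symmetric matrix $A$ of size $k\times k$, $\lambda_j(A)$ denotes its $j$-th largest eigenvalue ($\lambda_1$ largest, $\lambda_k$ smallest); for symmetric positive definite $A$, $\kappa(A)=\lambda_1(A)/\lambda_k(A)$. In the application, $P_f$ is an ensemble covariance with $X_f$ the scaled ensemble perturbation matrix, and $S_{P4D}$ is the Hessian of hybrid 4D-Var preconditioned by the control variable transform $\delta\boldsymbol{x}=U_h\delta\boldsymbol{v}$. *)

theory Defs
  imports "HOL-Analysis.Analysis"
begin

definition sym_mat :: "real^'n^'n \<Rightarrow> bool" where
  "sym_mat A \<longleftrightarrow> transpose A = A"

definition spd_mat :: "real^'n^'n \<Rightarrow> bool" where
  "spd_mat A \<longleftrightarrow> sym_mat A \<and> (\<forall>x::real^'n. x \<noteq> 0 \<longrightarrow> 0 < x \<bullet> (A *v x))"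

definition eigenvalues :: "real^'n^'n \<Rightarrow> real set" where
  "eigenvalues A = {l. \<exists>v. v \<noteq> 0 \<and> A *v v = l *\<^sub>R v}"

text \<open>Largest / smallest eigenvalue (meaningful for symmetric matrices).\<close>
definition lambda_max :: "real^'n^'n \<Rightarrow> real" where
  "lambda_max A = Max (eigenvalues A)"

definition lambda_min :: "real^'n^'n \<Rightarrow> real" where
  "lambda_min A = Min (eigenvalues A)"

definition cond_num :: "real^'n^'n \<Rightarrow> real" where
  "cond_num A = lambda_max A / lambda_min A"

definition hybrid_Uh :: "real \<Rightarrow> real^'n^'n \<Rightarrow> real^'m^'n \<Rightarrow> real^('n + 'm)^'n" where
  "hybrid_Uh \<beta> U X = (\<chi> i j. case j of Inl k \<Rightarrow> sqrt (1 - \<beta>) * U $ i $ k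
                                      | Inr k \<Rightarrow> sqrt \<beta> * X $ i $ k)"

end

theory Submission
  imports Defs
begin

text \<open>
  The quadratic form of \<open>S = I + U\<^sub>h\<^sup>T K U\<^sub>h\<close> is \<open>|x|\<^sup>2 + (U\<^sub>h x)\<^sup>T K (U\<^sub>h x)\<close> with
  \<open>K = H\<^sup>T R\<^sup>-\<^sup>1 H\<close> positive semidefinite, so it lies between \<open>|x|\<^sup>2\<close> and
  \<open>(1 + \<lambda>\<^sub>1(U\<^sub>h U\<^sub>h\<^sup>T) \<lambda>\<^sub>1(K)) |x|\<^sup>2\<close>. Since
  \<open>U\<^sub>h U\<^sub>h\<^sup>T = (1 - \<beta>) B\<^sub>0 + \<beta> P\<^sub>f\<close>, the largest eigenvalue of this matrix is at most
  \<open>(1 - \<beta>) \<lambda>\<^sub>1(B\<^sub>0) + \<beta> \<lambda>\<^sub>1(P\<^sub>f)\<close>. The extreme eigenvalues of a symmetric matrix are the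
  extreme values of its Rayleigh quotient, hence \<open>1 \<le> \<lambda>\<^sub>n(S) \<le> \<lambda>\<^sub>1(S)\<close> and
  \<open>\<kappa>(S) \<le> \<lambda>\<^sub>1(S)\<close> is bounded as claimed.
\<close>

lemma inner_transpose_matrix_vector:
  "(x::real^'n::finite) \<bullet> (A *v y) = (transpose A *v x) \<bullet> y"
  by (simp add: dot_lmul_matrix)

lemma inner_congruence:
  fixes M :: "real^'m::finite^'n::finite"
  shows "x \<bullet> ((transpose M ** A ** M) *v x) = (M *v x) \<bullet> (A *v (M *v x))"
  by (metis inner_transpose_matrix_vector matrix_vector_mul_assoc transpose_transpose)

lemma transpose_add: "transpose (A + B) = transpose A + transpose (B::'a::semiring_1^'n^'m)"
  by (simp add: vec_eq_iff transpose_def)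

lemma transpose_diff: "transpose (A - B) = transpose A - transpose (B::'a::ring_1^'n^'m)"
  by (simp add: vec_eq_iff transpose_def)

lemma matrix_vector_mult_uminus: "(- A) *v x = - (A *v (x::'a::ring_1^'n))"
  by (simp add: vec_eq_iff matrix_vector_mult_def sum_negf)

definition psd_mat :: "real^'n^'n \<Rightarrow> bool" where
  "psd_mat A \<longleftrightarrow> sym_mat A \<and> (\<forall>x::real^'n. 0 \<le> x \<bullet> (A *v x))"

lemma spd_imp_psd_mat: "spd_mat A \<Longrightarrow> psd_mat A"
  unfolding spd_mat_def psd_mat_def by (metis inner_zero_left order_le_less)

lemma psd_mat_congruence:
  fixes M :: "real^'m::finite^'n::finite"
  assumes "psd_mat A"
  shows "psd_mat (transpose M ** A ** M)"
  using assms unfolding psd_mat_def sym_mat_def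
  by (simp add: inner_congruence matrix_transpose_mul matrix_mul_assoc)

lemma spd_mat_matrix_inv:
  fixes A :: "real^'n::finite^'n"
  assumes "spd_mat A"
  shows "spd_mat (matrix_inv A)"
proof -
  have sym: "transpose A = A" and pos: "\<And>x. x \<noteq> 0 \<Longrightarrow> 0 < x \<bullet> (A *v x)"
    using assms unfolding spd_mat_def sym_mat_def by auto
  have "invertible A"
    using pos matrix_left_invertible_ker invertible_left_inverse
    by (metis inner_zero_right less_irrefl)
  then have inv: "A ** matrix_inv A = mat 1" "matrix_inv A ** A = mat 1"
    unfolding matrix_inv_def invertible_def by (metis (mono_tags, lifting) someI_ex)+
  have "transpose (matrix_inv A) = matrix_inv A"
    by (metis inv matrix_transpose_mul sym transpose_mat matrix_mul_assoc matrix_mul_lid matrix_mul_rid)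
  moreover have "0 < y \<bullet> (matrix_inv A *v y)" if "y \<noteq> 0" for y
  proof -
    define z where "z = matrix_inv A *v y"
    have y: "y = A *v z"
      by (simp add: z_def matrix_vector_mul_assoc inv)
    then have "z \<noteq> 0" using that by auto
    have "y \<bullet> (matrix_inv A *v y) = y \<bullet> z" by (simp add: z_def)
    also have "\<dots> = z \<bullet> (A *v z)" by (simp add: y inner_commute)
    finally show ?thesis using pos[OF \<open>z \<noteq> 0\<close>] by simp
  qed
  ultimately show ?thesis unfolding spd_mat_def sym_mat_def by blast
qed

lemma quadratic_nonneg_imp_linear_coeff_zero:
  fixes b c :: real
  assumes "\<And>t. 0 \<le> t * b + t\<^sup>2 * c"
  shows "b = 0"
proof (rule ccontr)
  assume "b \<noteq> 0"
  define d where "d = \<bar>c\<bar> + 1"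
  define t where "t = - b / d"
  have "0 < d" by (simp add: d_def add_nonneg_pos)
  have "t\<^sup>2 * c \<le> t\<^sup>2 * \<bar>c\<bar>" by (simp add: mult_left_mono)
  also have "\<dots> = b\<^sup>2 * \<bar>c\<bar> / d\<^sup>2" by (simp add: t_def power_divide)
  also have "\<dots> < b\<^sup>2 * d / d\<^sup>2"
    using \<open>b \<noteq> 0\<close> \<open>0 < d\<close> by (intro divide_strict_right_mono mult_strict_left_mono) (auto simp: d_def)
  also have "\<dots> = - (t * b)"
    using \<open>0 < d\<close> by (simp add: t_def power2_eq_square)
  finally show False using assms[of t] by linarith
qed

lemma psd_mat_quadratic_form_zero_imp_kernel:
  assumes "psd_mat A" and "u \<bullet> (A *v u) = 0"
  shows "A *v u = 0"
proof -
  define w where "w = A *v u"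
  have sym: "transpose A = A" and nonneg: "\<And>x. 0 \<le> x \<bullet> (A *v x)"
    using assms(1) unfolding psd_mat_def sym_mat_def by auto
  have "u \<bullet> (A *v w) = w \<bullet> w"
    by (metis inner_transpose_matrix_vector sym w_def)
  then have "(u + t *\<^sub>R w) \<bullet> (A *v (u + t *\<^sub>R w))
      = t * (2 * (w \<bullet> w)) + t\<^sup>2 * (w \<bullet> (A *v w))" for t
    using assms(2)
    by (simp add: w_def[symmetric] algebra_simps inner_add_left inner_add_right inner_commute power2_eq_square)
  then have "2 * (w \<bullet> w) = 0"
    using nonneg by (intro quadratic_nonneg_imp_linear_coeff_zero[of _ "w \<bullet> (A *v w)"]) metis
  then show ?thesis by (simp add: w_def)
qed

lemma sym_mat_has_max_eigenvalue:
  fixes A :: "real^'n::finite^'n"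
  assumes "sym_mat A"
  shows "\<exists>l\<in>eigenvalues A. \<forall>x. x \<bullet> (A *v x) \<le> l * (x \<bullet> x)"
proof -
  have "continuous_on (sphere 0 1) (\<lambda>x::real^'n. x \<bullet> (A *v x))"
    by (intro continuous_on_inner continuous_on_id linear_continuous_on)
       (simp add: linear_conv_bounded_linear[symmetric])
  moreover have "sphere (0::real^'n) 1 \<noteq> {}"
    using vector_choose_size[of 1] by auto
  ultimately obtain u where "u \<in> sphere 0 1"
    and max: "\<forall>y\<in>sphere 0 1. y \<bullet> (A *v y) \<le> u \<bullet> (A *v u)"
    using continuous_attains_sup[OF compact_sphere] by blast
  then have u: "norm u = 1" by simp
  define l where "l = u \<bullet> (A *v u)"
  have bound: "x \<bullet> (A *v x) \<le> l * (x \<bullet> x)" for x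
  proof (cases "x = 0")
    case False
    define y where "y = (1 / norm x) *\<^sub>R x"
    have "norm y = 1" using False by (simp add: y_def)
    then have "y \<bullet> (A *v y) \<le> l" using max by (simp add: l_def)
    moreover have "x \<bullet> (A *v x) = (x \<bullet> x) * (y \<bullet> (A *v y))"
      using False by (simp add: y_def matrix_vector_mult_scaleR dot_square_norm power2_eq_square)
    ultimately show ?thesis
      by (metis inner_ge_zero mult.commute mult_left_mono)
  qed simp
  \<comment> \<open>\<open>l I - A\<close> is positive semidefinite and its quadratic form vanishes at \<open>u\<close>,
    so \<open>u\<close> lies in its kernel.\<close>
  define B where "B = l *\<^sub>R mat 1 - A"
  have B_apply: "B *v x = l *\<^sub>R x - A *v x" for x
    by (simp add: B_def matrix_vector_mult_diff_rdistrib scaleR_matrix_vector_assoc[symmetric])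
  have "sym_mat B"
    using assms unfolding sym_mat_def by (simp add: B_def transpose_diff transpose_scalar)
  moreover have "0 \<le> x \<bullet> (B *v x)" for x
    using bound[of x] by (simp add: B_apply inner_diff_right)
  ultimately have "psd_mat B"
    unfolding psd_mat_def by blast
  moreover have "u \<bullet> (B *v u) = 0"
    using u by (simp add: B_apply l_def inner_diff_right dot_square_norm)
  ultimately have "B *v u = 0"
    by (rule psd_mat_quadratic_form_zero_imp_kernel)
  then have "A *v u = l *\<^sub>R u"
    by (simp add: B_apply)
  then have "l \<in> eigenvalues A"
    using u unfolding eigenvalues_def by (intro CollectI exI[of _ u]) auto
  with bound show ?thesis by blast
qed

lemma eigenvalue_le_of_quadratic_form_le:
  assumes "e \<in> eigenvalues A" and "\<And>x. x \<bullet> (A *v x) \<le> c * (x \<bullet> x)"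
  shows "e \<le> c"
proof -
  obtain v where "v \<noteq> 0" and "A *v v = e *\<^sub>R v"
    using assms(1) unfolding eigenvalues_def by blast
  then show ?thesis
    using assms(2)[of v] by simp
qed

lemma eigenvalue_ge_of_quadratic_form_ge:
  assumes "e \<in> eigenvalues A" and "\<And>x. c * (x \<bullet> x) \<le> x \<bullet> (A *v x)"
  shows "c \<le> e"
proof -
  obtain v where "v \<noteq> 0" and "A *v v = e *\<^sub>R v"
    using assms(1) unfolding eigenvalues_def by blast
  then show ?thesis
    using assms(2)[of v] by simp
qed

lemma finite_eigenvalues_sym_mat:
  fixes A :: "real^'n::finite^'n"
  assumes "sym_mat A"
  shows "finite (eigenvalues A)"
proof -
  define v where "v e = (SOME v. v \<noteq> 0 \<and> A *v v = e *\<^sub>R v)" for e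
  have v: "v e \<noteq> 0 \<and> A *v v e = e *\<^sub>R v e" if "e \<in> eigenvalues A" for e
    using that unfolding eigenvalues_def v_def by (metis (mono_tags, lifting) mem_Collect_eq someI_ex)
  have orth: "v d \<bullet> v e = 0" if "d \<in> eigenvalues A" "e \<in> eigenvalues A" "d \<noteq> e" for d e
  proof -
    have "d * (v d \<bullet> v e) = (A *v v d) \<bullet> v e" using v[OF that(1)] by simp
    also have "\<dots> = v d \<bullet> (A *v v e)"
      using assms unfolding sym_mat_def by (metis inner_transpose_matrix_vector)
    also have "\<dots> = e * (v d \<bullet> v e)" using v[OF that(2)] by simp
    finally show ?thesis using \<open>d \<noteq> e\<close> by simp
  qed
  have inj: "inj_on v (eigenvalues A)"
  proof (rule inj_onI)
    fix d e assume d: "d \<in> eigenvalues A" and e: "e \<in> eigenvalues A" and "v d = v e"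
    show "d = e"
    proof (rule ccontr)
      assume "d \<noteq> e"
      then have "v d \<bullet> v d = 0" using orth[OF d e] \<open>v d = v e\<close> by simp
      then show False using v[OF d] by simp
    qed
  qed
  have "pairwise orthogonal (v ` eigenvalues A)"
  proof (rule pairwiseI, clarify)
    fix d e assume "d \<in> eigenvalues A" "e \<in> eigenvalues A" "v d \<noteq> v e"
    then show "orthogonal (v d) (v e)"
      unfolding orthogonal_def by (intro orth) auto
  qed
  moreover have "0 \<notin> v ` eigenvalues A"
    using v by (auto simp: image_iff)
  ultimately have "independent (v ` eigenvalues A)"
    by (rule pairwise_orthogonal_independent)
  then have "finite (v ` eigenvalues A)"
    by (rule independent_bound[THEN conjunct1])
  then show ?thesis
    by (rule finite_imageD[OF _ inj])
qed

lemma
  fixes A :: "real^'n::finite^'n"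
  assumes "sym_mat A"
  shows lambda_max_in_eigenvalues: "lambda_max A \<in> eigenvalues A"
    and quadratic_form_le_lambda_max: "x \<bullet> (A *v x) \<le> lambda_max A * (x \<bullet> x)"
proof -
  obtain l where l: "l \<in> eigenvalues A" and bound: "\<And>x. x \<bullet> (A *v x) \<le> l * (x \<bullet> x)"
    using sym_mat_has_max_eigenvalue[OF assms] by blast
  have "lambda_max A = l"
    unfolding lambda_max_def
  proof (rule Max_eqI)
    fix e assume "e \<in> eigenvalues A"
    then show "e \<le> l" using bound by (rule eigenvalue_le_of_quadratic_form_le)
  qed (use l finite_eigenvalues_sym_mat[OF assms] in auto)
  with l bound show "lambda_max A \<in> eigenvalues A" "x \<bullet> (A *v x) \<le> lambda_max A * (x \<bullet> x)"
    by auto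
qed

lemma
  fixes A :: "real^'n::finite^'n"
  assumes "sym_mat A"
  shows lambda_min_in_eigenvalues: "lambda_min A \<in> eigenvalues A"
    and lambda_min_le_quadratic_form: "lambda_min A * (x \<bullet> x) \<le> x \<bullet> (A *v x)"
proof -
  have "sym_mat (- A)"
    using assms unfolding sym_mat_def by (simp add: vec_eq_iff transpose_def)
  then obtain l where "l \<in> eigenvalues (- A)"
    and bound_neg: "\<And>x. x \<bullet> ((- A) *v x) \<le> l * (x \<bullet> x)"
    using sym_mat_has_max_eigenvalue by blast
  then obtain u where "u \<noteq> 0" "(- A) *v u = l *\<^sub>R u"
    unfolding eigenvalues_def by blast
  have "A *v u = - ((- A) *v u)"
    by (simp add: matrix_vector_mult_uminus)
  then have "A *v u = (- l) *\<^sub>R u"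
    using \<open>(- A) *v u = l *\<^sub>R u\<close> by simp
  then have l: "- l \<in> eigenvalues A"
    unfolding eigenvalues_def using \<open>u \<noteq> 0\<close> by blast
  have bound: "- l * (x \<bullet> x) \<le> x \<bullet> (A *v x)" for x
    using bound_neg[of x] by (simp add: matrix_vector_mult_uminus)
  have "lambda_min A = - l"
    unfolding lambda_min_def
  proof (rule Min_eqI)
    fix e assume "e \<in> eigenvalues A"
    then show "- l \<le> e" using bound by (rule eigenvalue_ge_of_quadratic_form_ge)
  qed (use l finite_eigenvalues_sym_mat[OF assms] in auto)
  with l bound show "lambda_min A \<in> eigenvalues A" "lambda_min A * (x \<bullet> x) \<le> x \<bullet> (A *v x)"
    by auto
qed

lemma lambda_max_le:
  assumes "sym_mat A" and "\<And>x. x \<bullet> (A *v x) \<le> c * (x \<bullet> x)"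
  shows "lambda_max A \<le> c"
  using lambda_max_in_eigenvalues[OF assms(1)] assms(2) by (rule eigenvalue_le_of_quadratic_form_le)

lemma lambda_min_ge:
  assumes "sym_mat A" and "\<And>x. c * (x \<bullet> x) \<le> x \<bullet> (A *v x)"
  shows "c \<le> lambda_min A"
  using lambda_min_in_eigenvalues[OF assms(1)] assms(2) by (rule eigenvalue_ge_of_quadratic_form_ge)

lemma lambda_min_le_lambda_max: "sym_mat A \<Longrightarrow> lambda_min A \<le> lambda_max A"
  by (rule eigenvalue_ge_of_quadratic_form_ge[OF lambda_max_in_eigenvalues lambda_min_le_quadratic_form])

lemma lambda_max_nonneg:
  assumes "psd_mat A"
  shows "0 \<le> lambda_max A"
proof (rule eigenvalue_ge_of_quadratic_form_ge)
  show "lambda_max A \<in> eigenvalues A"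
    using assms unfolding psd_mat_def by (blast intro: lambda_max_in_eigenvalues)
  show "0 * (x \<bullet> x) \<le> x \<bullet> (A *v x)" for x
    using assms unfolding psd_mat_def by simp
qed

lemma lambda_max_add_le:
  assumes "sym_mat A" "sym_mat B" "0 \<le> a" "0 \<le> b"
  shows "lambda_max (a *\<^sub>R A + b *\<^sub>R B) \<le> a * lambda_max A + b * lambda_max B"
proof (rule lambda_max_le)
  show "sym_mat (a *\<^sub>R A + b *\<^sub>R B)"
    using assms unfolding sym_mat_def by (simp add: transpose_add transpose_scalar)
  fix x
  have "x \<bullet> ((a *\<^sub>R A + b *\<^sub>R B) *v x) = a * (x \<bullet> (A *v x)) + b * (x \<bullet> (B *v x))"
    by (simp add: matrix_vector_mult_add_rdistrib scaleR_matrix_vector_assoc[symmetric] inner_add_right)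
  also have "\<dots> \<le> a * (lambda_max A * (x \<bullet> x)) + b * (lambda_max B * (x \<bullet> x))"
    using assms by (simp add: add_mono mult_left_mono quadratic_form_le_lambda_max)
  finally show "x \<bullet> ((a *\<^sub>R A + b *\<^sub>R B) *v x) \<le> (a * lambda_max A + b * lambda_max B) * (x \<bullet> x)"
    by (simp add: algebra_simps)
qed

lemma cond_num_bounds:
  assumes "sym_mat A" and "1 \<le> lambda_min A"
  shows "1 \<le> cond_num A" and "cond_num A \<le> lambda_max A"
proof -
  have "lambda_min A \<le> lambda_max A" using lambda_min_le_lambda_max[OF assms(1)] .
  with assms(2) show "1 \<le> cond_num A" by (simp add: cond_num_def le_divide_eq)
  have "lambda_max A / lambda_min A \<le> lambda_max A / 1"
    using assms(2) \<open>lambda_min A \<le> lambda_max A\<close> by (intro divide_left_mono) simp_all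
  then show "cond_num A \<le> lambda_max A" by (simp add: cond_num_def)
qed

lemma inner_identity_plus: "x \<bullet> ((mat 1 + C) *v x) = x \<bullet> x + x \<bullet> (C *v (x::real^'n::finite))"
  by (simp add: matrix_vector_mult_add_rdistrib inner_add_right)

lemma psd_mat_identity_plus:
  assumes "psd_mat C"
  shows "psd_mat (mat 1 + C)"
  using assms unfolding psd_mat_def sym_mat_def
  by (simp add: transpose_add inner_identity_plus add_nonneg_nonneg)

lemma one_le_lambda_min_identity_plus:
  assumes "psd_mat C"
  shows "1 \<le> lambda_min (mat 1 + C)"
proof (rule lambda_min_ge)
  show "sym_mat (mat 1 + C)"
    using psd_mat_identity_plus[OF assms] unfolding psd_mat_def by blast
  show "1 * (x \<bullet> x) \<le> x \<bullet> ((mat 1 + C) *v x)" for x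
    using assms unfolding psd_mat_def by (simp add: inner_identity_plus)
qed

lemma inner_matrix_vector_le_lambda_max:
  fixes M :: "real^'m::finite^'n::finite"
  shows "(M *v x) \<bullet> (M *v x) \<le> lambda_max (M ** transpose M) * (x \<bullet> x)"
proof -
  define c where "c = lambda_max (M ** transpose M)"
  have quad: "y \<bullet> ((M ** transpose M) *v y) = (transpose M *v y) \<bullet> (transpose M *v y)" for y
    by (metis inner_transpose_matrix_vector matrix_vector_mul_assoc)
  have psd: "psd_mat (M ** transpose M)"
    unfolding psd_mat_def sym_mat_def by (simp add: matrix_transpose_mul quad)
  then have "0 \<le> c"
    unfolding c_def by (rule lambda_max_nonneg)
  have dual: "(transpose M *v y) \<bullet> (transpose M *v y) \<le> c * (y \<bullet> y)" for y
  proof -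
    have "y \<bullet> ((M ** transpose M) *v y) \<le> c * (y \<bullet> y)"
      using psd unfolding psd_mat_def c_def by (blast intro: quadratic_form_le_lambda_max)
    then show ?thesis by (simp only: quad)
  qed
  \<comment> \<open>Cauchy-Schwarz transfers the bound from \<open>M\<^sup>T\<close> to \<open>M\<close>:
    \<open>|M x|\<^sup>4 = (x \<bullet> M\<^sup>T M x)\<^sup>2 \<le> |x|\<^sup>2 |M\<^sup>T M x|\<^sup>2 \<le> c |x|\<^sup>2 |M x|\<^sup>2\<close>.\<close>
  define a where "a = (M *v x) \<bullet> (M *v x)"
  define w where "w = transpose M *v (M *v x)"
  have "0 \<le> a" by (simp add: a_def)
  have "a = x \<bullet> w"
    unfolding a_def w_def by (simp add: inner_transpose_matrix_vector inner_commute)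
  also have "\<dots> \<le> norm x * norm w"
    by (rule norm_cauchy_schwarz)
  finally have "a\<^sup>2 \<le> (norm x * norm w)\<^sup>2"
    using \<open>0 \<le> a\<close> by (rule power_mono)
  also have "\<dots> = (x \<bullet> x) * (w \<bullet> w)"
    by (simp add: power_mult_distrib power2_norm_eq_inner)
  also have "\<dots> \<le> (x \<bullet> x) * (c * a)"
    unfolding a_def w_def by (intro mult_left_mono dual) simp
  finally have "a * a \<le> (c * (x \<bullet> x)) * a"
    by (simp add: power2_eq_square algebra_simps)
  then have "a \<le> c * (x \<bullet> x)"
    using \<open>0 \<le> a\<close> \<open>0 \<le> c\<close> by (cases "a = 0") (simp_all add: mult_le_cancel_right)
  then show ?thesis by (simp add: a_def c_def)
qed

lemma lambda_max_identity_plus_congruence_le: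
  fixes M :: "real^'m::finite^'n::finite"
  assumes "psd_mat K"
  shows "lambda_max (mat 1 + transpose M ** K ** M)
           \<le> 1 + lambda_max (M ** transpose M) * lambda_max K"
proof (rule lambda_max_le)
  show "sym_mat (mat 1 + transpose M ** K ** M)"
    using psd_mat_identity_plus[OF psd_mat_congruence[OF assms]] unfolding psd_mat_def by blast
  fix x
  have "(M *v x) \<bullet> (K *v (M *v x)) \<le> lambda_max K * ((M *v x) \<bullet> (M *v x))"
    using assms unfolding psd_mat_def by (simp add: quadratic_form_le_lambda_max)
  also have "\<dots> \<le> lambda_max K * (lambda_max (M ** transpose M) * (x \<bullet> x))"
    using assms by (simp add: lambda_max_nonneg mult_left_mono inner_matrix_vector_le_lambda_max)
  finally show "x \<bullet> ((mat 1 + transpose M ** K ** M) *v x)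
      \<le> (1 + lambda_max (M ** transpose M) * lambda_max K) * (x \<bullet> x)"
    by (simp add: inner_identity_plus inner_congruence algebra_simps)
qed

lemma sum_UNIV_Plus:
  "(\<Sum>j\<in>UNIV. f j) = (\<Sum>k\<in>UNIV. f (Inl k)) + (\<Sum>k\<in>UNIV. f (Inr k :: 'a::finite + 'b::finite))"
  by (subst UNIV_Plus_UNIV[symmetric], subst sum.Plus) auto

lemma sqrt_mult_sqrt_mult:
  fixes a p q :: real
  assumes "0 \<le> a"
  shows "sqrt a * p * (sqrt a * q) = a * (p * q)"
proof -
  have "sqrt a * p * (sqrt a * q) = (sqrt a * sqrt a) * (p * q)" by (simp only: mult_ac)
  then show ?thesis using assms by simp
qed

lemma hybrid_Uh_mult_transpose:
  assumes "0 \<le> \<beta>" and "\<beta> \<le> 1"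
  shows "hybrid_Uh \<beta> U X ** transpose (hybrid_Uh \<beta> U X)
           = (1 - \<beta>) *\<^sub>R (U ** transpose U) + \<beta> *\<^sub>R (X ** transpose X)"
proof (rule vec_eq_iff[THEN iffD2, rule_format], rule vec_eq_iff[THEN iffD2, rule_format])
  fix i j
  have "(hybrid_Uh \<beta> U X ** transpose (hybrid_Uh \<beta> U X)) $ i $ j
      = (\<Sum>k\<in>UNIV. sqrt (1 - \<beta>) * U $ i $ k * (sqrt (1 - \<beta>) * U $ j $ k))
        + (\<Sum>k\<in>UNIV. sqrt \<beta> * X $ i $ k * (sqrt \<beta> * X $ j $ k))"
    unfolding matrix_matrix_mult_def transpose_def hybrid_Uh_def by (simp add: sum_UNIV_Plus)
  also have "\<dots> = (1 - \<beta>) * (\<Sum>k\<in>UNIV. U $ i $ k * U $ j $ k) + \<beta> * (\<Sum>k\<in>UNIV. X $ i $ k * X $ j $ k)"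
    using assms by (simp add: sqrt_mult_sqrt_mult sum_distrib_left)
  also have "\<dots> = ((1 - \<beta>) *\<^sub>R (U ** transpose U) + \<beta> *\<^sub>R (X ** transpose X)) $ i $ j"
    by (simp add: matrix_matrix_mult_def transpose_def)
  finally show "(hybrid_Uh \<beta> U X ** transpose (hybrid_Uh \<beta> U X)) $ i $ j
      = ((1 - \<beta>) *\<^sub>R (U ** transpose U) + \<beta> *\<^sub>R (X ** transpose X)) $ i $ j" .
qed

theorem theorem6:
  fixes \<beta> :: real
    and B0 U :: "real^'n::finite^'n"
    and Xf :: "real^'m::finite^'n"
    and H :: "real^'n^'q::finite"
    and R :: "real^'q^'q"
  assumes "0 \<le> \<beta>" and "\<beta> \<le> 1"
    and "spd_mat B0"
    and "spd_mat U" and "U ** U = B0"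
    and "spd_mat R"
  shows "1 \<le> cond_num (mat 1 + transpose (hybrid_Uh \<beta> U Xf) **
                         (transpose H ** matrix_inv R ** H) ** hybrid_Uh \<beta> U Xf)
       \<and> cond_num (mat 1 + transpose (hybrid_Uh \<beta> U Xf) **
                         (transpose H ** matrix_inv R ** H) ** hybrid_Uh \<beta> U Xf)
         \<le> 1 + ((1 - \<beta>) * lambda_max B0 + \<beta> * lambda_max (Xf ** transpose Xf))
                 * lambda_max (transpose H ** matrix_inv R ** H)"
proof -
  define K where "K = transpose H ** matrix_inv R ** H"
  define Uh where "Uh = hybrid_Uh \<beta> U Xf"
  define S where "S = mat 1 + transpose Uh ** K ** Uh"
  define c where "c = (1 - \<beta>) * lambda_max B0 + \<beta> * lambda_max (Xf ** transpose Xf)"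
  have K: "psd_mat K"
    unfolding K_def using spd_mat_matrix_inv[OF assms(6)] by (intro psd_mat_congruence spd_imp_psd_mat)
  have S: "sym_mat S"
    using psd_mat_identity_plus[OF psd_mat_congruence[OF K]] unfolding S_def psd_mat_def by blast
  have "1 \<le> lambda_min S"
    unfolding S_def using K by (intro one_le_lambda_min_identity_plus psd_mat_congruence)
  have "Uh ** transpose Uh = (1 - \<beta>) *\<^sub>R B0 + \<beta> *\<^sub>R (Xf ** transpose Xf)"
    using assms(1,2,4,5) by (simp add: Uh_def hybrid_Uh_mult_transpose spd_mat_def sym_mat_def)
  moreover have "sym_mat B0" "sym_mat (Xf ** transpose Xf)"
    using assms(3) by (simp_all add: spd_mat_def sym_mat_def matrix_transpose_mul)
  ultimately have "lambda_max (Uh ** transpose Uh) \<le> c"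
    unfolding c_def using assms(1,2) by (simp add: lambda_max_add_le)
  have "lambda_max S \<le> 1 + lambda_max (Uh ** transpose Uh) * lambda_max K"
    unfolding S_def using K by (rule lambda_max_identity_plus_congruence_le)
  also have "\<dots> \<le> 1 + c * lambda_max K"
    using \<open>lambda_max (Uh ** transpose Uh) \<le> c\<close> lambda_max_nonneg[OF K] by (simp add: mult_right_mono)
  finally show ?thesis
    using cond_num_bounds[OF S \<open>1 \<le> lambda_min S\<close>] unfolding S_def K_def Uh_def c_def by linarith
qed

end
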